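(* Let $\mathcal O$ be the ring of integers of a finite extension of $\mathbb{Q}_p$, with maximal ideal $\mathfrak m$ of ramification index $e\le p-1$ and residue field $\mathbb F$. Let $P,Q\in\mathcal O[X]$ be monic of degree $d$, with roots $\alpha_1,\dots,\alpha_d$ and $\beta_1,\dots,\beta_d$ respectively (with multiplicity) in the ring of integers $\mathcal O'$ of a finite extension, with maximal ideal $\mathfrak m'$. Suppose that for every $n\ge1$, $$\alpha_1^n+\dots+\alpha_d^n\equiv\beta_1^n+\dots+\beta_d^n\pmod{n\mathfrak m}.$$ Then after reordering, $\alpha_i\equiv\beta_i\pmod{\mathfrak m'}$ for every $1\le i\le d$.
   Context: $n\mathfrak m=\{na:a\in\mathfrak m\}\subseteq\mathcal O$; the congruence is an assertion about elements of $\mathcal O$. *)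

theory Defs
  imports "HOL-Computational_Algebra.Polynomial"
begin

definition is_subfield :: "'a::field set \<Rightarrow> bool" where
  "is_subfield K \<longleftrightarrow> 0 \<in> K \<and> 1 \<in> K \<and>
     (\<forall>x\<in>K. \<forall>y\<in>K. x + y \<in> K \<and> x - y \<in> K \<and> x * y \<in> K) \<and>
     (\<forall>x\<in>K. inverse x \<in> K)"

text \<open>A normalized discrete valuation on the nonzero elements of a subfield S
  (its value at 0, i.e. infinity, is not represented; 0 is treated separately).\<close>
definition discrete_valuation_on :: "'a::field set \<Rightarrow> ('a \<Rightarrow> int) \<Rightarrow> bool" where
  "discrete_valuation_on S v \<longleftrightarrow>
     (\<forall>x\<in>S - {0}. \<forall>y\<in>S - {0}. v (x * y) = v x + v y \<and>
        (x + y \<noteq> 0 \<longrightarrow> v (x + y) \<ge> min (v x) (v y))) \<and>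
     v ` (S - {0}) = UNIV"

definition val_ring :: "'a::field set \<Rightarrow> ('a \<Rightarrow> int) \<Rightarrow> 'a set" where
  "val_ring S v = {x \<in> S. x = 0 \<or> v x \<ge> 0}"

definition val_ideal :: "'a::field set \<Rightarrow> ('a \<Rightarrow> int) \<Rightarrow> 'a set" where
  "val_ideal S v = {x \<in> S. x = 0 \<or> v x > 0}"

definition val_complete :: "'a::field set \<Rightarrow> ('a \<Rightarrow> int) \<Rightarrow> bool" where
  "val_complete S v \<longleftrightarrow>
     (\<forall>x :: nat \<Rightarrow> 'a. (\<forall>k. x k \<in> S) \<longrightarrow>
        (\<forall>N. \<exists>M. \<forall>i\<ge>M. \<forall>j\<ge>M. x i = x j \<or> v (x i - x j) \<ge> N) \<longrightarrow>
        (\<exists>l\<in>S. \<forall>N. \<exists>M. \<forall>i\<ge>M. x i = l \<or> v (x i - l) \<ge> N))"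

text \<open>K (inside a field of characteristic 0) with v is (the valued field of) a finite
  extension of Q_p: a complete discretely valued field of characteristic 0 whose
  residue field is finite of characteristic p.\<close>
definition padic_local_field :: "'a::field_char_0 set \<Rightarrow> ('a \<Rightarrow> int) \<Rightarrow> nat \<Rightarrow> bool" where
  "padic_local_field K v p \<longleftrightarrow>
     prime p \<and> is_subfield K \<and> discrete_valuation_on K v \<and> val_complete K v \<and>
     v (of_nat p) > 0 \<and>
     (\<exists>R. finite R \<and> R \<subseteq> val_ring K v \<and>
        (\<forall>x\<in>val_ring K v. \<exists>r\<in>R. x - r \<in> val_ideal K v))"

text \<open>The whole field (type 'a) is a finite extension of K, equipped with a normalized
  discrete valuation w extending (a positive multiple of) v.\<close>
definition finite_valued_extension ::
    "'a::field set \<Rightarrow> ('a \<Rightarrow> int) \<Rightarrow> ('a \<Rightarrow> int) \<Rightarrow> bool" where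
  "finite_valued_extension K v w \<longleftrightarrow>
     (\<exists>B. finite B \<and> (\<forall>x. \<exists>c. (\<forall>b\<in>B. c b \<in> K) \<and> x = (\<Sum>b\<in>B. c b * b))) \<and>
     discrete_valuation_on UNIV w \<and>
     (\<exists>c::int. c > 0 \<and> (\<forall>x\<in>K - {0}. w x = c * v x))"

end

theory Submission
  imports Defs "HOL-Computational_Algebra.Polynomial_FPS" "HOL-Combinatorics.Transposition"
begin

text \<open>Let \<open>A = \<Prod>(1 - \<alpha>\<^sub>i X)\<close> and \<open>B = \<Prod>(1 - \<beta>\<^sub>i X)\<close> be the reversed
  polynomials, whose logarithmic derivatives are \<open>-\<Sum>\<^sub>n p\<^sub>n\<^sub>+\<^sub>1(\<alpha>) X\<^sup>n\<close> and
  \<open>-\<Sum>\<^sub>n p\<^sub>n\<^sub>+\<^sub>1(\<beta>) X\<^sup>n\<close> for the power sums \<open>p\<^sub>n\<close>. Writing \<open>p\<^sub>n(\<alpha>) - p\<^sub>n(\<beta>) = n c\<^sub>n\<close>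
  with \<open>c\<^sub>n\<close> in the maximal ideal of \<open>K\<close>, the series \<open>A\<close> and \<open>B \<Prod>\<^sub>n\<^sub>\<le>\<^sub>d exp (- c\<^sub>n X\<^sup>n)\<close>
  satisfy the same linear differential equation up to degree \<open>d\<close>, hence agree modulo
  \<open>X\<^sup>d\<^sup>+\<^sup>1\<close>. Since \<open>e \<le> p - 1\<close>, Legendre's formula gives \<open>w(k!) < k w(c\<^sub>n)\<close>, so each
  \<open>exp (- c\<^sub>n X\<^sup>n)\<close> is \<open>1\<close> modulo the maximal ideal \<open>\<M>\<close> of \<open>w\<close>. Thus \<open>P \<equiv> Q\<close> modulo \<open>\<M>\<close>,
  and unique factorization over the residue field matches the roots.\<close>

unbundle fps_syntax

lemma fps_mult_nth_cong:
  assumes "\<forall>j\<le>k. f $ j = f' $ j" and "\<forall>j\<le>k. g $ j = g' $ j"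
  shows "(f * g) $ k = (f' * g') $ k"
  using assms by (simp add: fps_mult_nth)

lemma fps_prod_nth_0: "prod f A $ 0 = (\<Prod>i\<in>A. f i $ 0)"
  by (induction A rule: infinite_finite_induct) (simp_all add: fps_mult_nth)

lemma fps_deriv_prod_eq_sum_mult:
  fixes f g :: "'i \<Rightarrow> 'a::comm_ring_1 fps"
  assumes "finite A" and "\<And>i. i \<in> A \<Longrightarrow> fps_deriv (f i) = g i * f i"
  shows "fps_deriv (prod f A) = sum g A * prod f A"
  using assms by (induction A rule: finite_induct) (simp_all add: algebra_simps)

lemma fps_deriv_prod_one_minus_const_X:
  fixes a :: "'i \<Rightarrow> 'a::comm_ring_1"
  assumes "finite I"
  shows "fps_deriv (\<Prod>i\<in>I. 1 - fps_const (a i) * fps_X) =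
    - Abs_fps (\<lambda>n. \<Sum>i\<in>I. a i ^ Suc n) * (\<Prod>i\<in>I. 1 - fps_const (a i) * fps_X)"
proof -
  have geometric: "Abs_fps (\<lambda>n. c ^ Suc n) * (1 - fps_const c * fps_X) = fps_const c" for c :: 'a
    by (rule fps_ext) (auto simp: fps_mult_nth_1' algebra_simps split: nat.split simp flip: power_Suc)
  have "fps_deriv (\<Prod>i\<in>I. 1 - fps_const (a i) * fps_X) =
      (\<Sum>i\<in>I. - Abs_fps (\<lambda>n. a i ^ Suc n)) * (\<Prod>i\<in>I. 1 - fps_const (a i) * fps_X)"
    using geometric by (intro fps_deriv_prod_eq_sum_mult[OF assms]) (simp del: power_Suc)
  also have "(\<Sum>i\<in>I. - Abs_fps (\<lambda>n. a i ^ Suc n)) = - Abs_fps (\<lambda>n. \<Sum>i\<in>I. a i ^ Suc n)"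
    by (rule fps_ext) (simp add: fps_sum_nth sum_negf)
  finally show ?thesis .
qed

lemma fps_nth_eq_if_deriv_eq_mult:
  fixes F G S :: "'a::field_char_0 fps"
  assumes "F $ 0 = G $ 0"
    and "\<forall>k<N. fps_deriv F $ k = (S * F) $ k" and "\<forall>k<N. fps_deriv G $ k = (S * G) $ k"
  shows "\<forall>k\<le>N. F $ k = G $ k"
proof -
  have "k \<le> N \<Longrightarrow> \<forall>j\<le>k. F $ j = G $ j" for k
  proof (induction k)
    case (Suc k)
    then have IH: "\<forall>j\<le>k. F $ j = G $ j"
      by simp
    have "of_nat (Suc k) * F $ Suc k = (S * F) $ k"
      using assms(2) Suc.prems by (simp add: mult.commute)
    also have "\<dots> = (S * G) $ k"
      using IH by (intro fps_mult_nth_cong) simp_all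
    also have "\<dots> = of_nat (Suc k) * G $ Suc k"
      using assms(3) Suc.prems by (simp add: mult.commute)
    finally have "F $ Suc k = G $ Suc k"
      by (simp del: of_nat_Suc)
    with IH show ?case
      using le_Suc_eq by auto
  qed (use assms(1) in simp)
  then show ?thesis
    by blast
qed

definition fps_exp_X_power :: "'a::field_char_0 \<Rightarrow> nat \<Rightarrow> 'a fps" where
  "fps_exp_X_power c n = Abs_fps (\<lambda>m. if n dvd m then c ^ (m div n) / fact (m div n) else 0)"

lemma fps_exp_X_power_nth_0 [simp]: "fps_exp_X_power c n $ 0 = 1"
  by (simp add: fps_exp_X_power_def)

lemma fps_deriv_fps_exp_X_power:
  assumes "1 \<le> n"
  shows "fps_deriv (fps_exp_X_power c n) =
    fps_const (of_nat n * c) * fps_X ^ (n - 1) * fps_exp_X_power c n"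
proof (rule fps_ext)
  fix m
  have rhs: "(fps_const (of_nat n * c) * fps_X ^ (n - 1) * fps_exp_X_power c n) $ m =
      of_nat n * c * (if m < n - 1 then 0 else fps_exp_X_power c n $ (m - (n - 1)))"
    by (simp add: mult.assoc fps_X_power_mult_nth)
  show "fps_deriv (fps_exp_X_power c n) $ m =
      (fps_const (of_nat n * c) * fps_X ^ (n - 1) * fps_exp_X_power c n) $ m"
  proof (cases "n dvd Suc m")
    case True
    then obtain i where i: "Suc m = n * Suc i"
      by (metis dvd_def mult_0_right nat.exhaust nat.simps(3))
    then have "\<not> m < n - 1" "m - (n - 1) = n * i"
      using assms by (simp_all add: algebra_simps)
    moreover have "of_nat (Suc m) * (c ^ Suc i / fact (Suc i)) = of_nat n * c * (c ^ i / fact i :: 'a)"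
      unfolding i by (simp add: field_simps del: of_nat_Suc) (simp add: algebra_simps)
    ultimately show ?thesis
      unfolding rhs using assms by (simp add: fps_exp_X_power_def i del: of_nat_Suc)
  next
    case False
    have "\<not> n dvd m - (n - 1)" if "\<not> m < n - 1"
    proof -
      have "Suc m = (m - (n - 1)) + n"
        using that assms by simp
      then show ?thesis
        using False by (metis dvd_add_triv_right_iff)
    qed
    then show ?thesis
      unfolding rhs using False by (simp add: fps_exp_X_power_def)
  qed
qed

definition fps_over :: "'a::zero set \<Rightarrow> 'a fps set" where
  "fps_over S = {f. \<forall>n. f $ n \<in> S}"

definition poly_over :: "'a::zero set \<Rightarrow> 'a poly set" where
  "poly_over S = {f. \<forall>n. coeff f n \<in> S}"

lemma fps_of_poly_reflect_linear:
  "fps_of_poly (reflect_poly [:- c, 1:]) = 1 - fps_const (c :: 'a::comm_ring_1) * fps_X"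
  by (rule fps_ext) (simp add: fps_of_poly_nth coeff_reflect_poly coeff_pCons split: nat.split)

lemma coeff_prod_linear_eq_fps_nth:
  fixes a :: "nat \<Rightarrow> 'a::idom"
  assumes "k \<le> d"
  shows "coeff (\<Prod>i<d. [:- a i, 1:]) k = (\<Prod>i<d. 1 - fps_const (a i) * fps_X) $ (d - k)"
proof -
  have "(\<Prod>i<d. 1 - fps_const (a i) * fps_X) = fps_of_poly (reflect_poly (\<Prod>i<d. [:- a i, 1:]))"
    by (simp add: reflect_poly_prod fps_of_poly_prod fps_of_poly_reflect_linear)
  moreover have "degree (\<Prod>i<d. [:- a i, 1:]) = d"
    by (simp add: degree_prod_sum_eq)
  ultimately show ?thesis
    using assms by (simp add: fps_of_poly_nth coeff_reflect_poly)
qed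


locale discrete_valuation =
  fixes w :: "'a::field \<Rightarrow> int"
  assumes valuation: "discrete_valuation_on UNIV w"
begin

abbreviation \<O> :: "'a set" where "\<O> \<equiv> val_ring UNIV w"
abbreviation \<M> :: "'a set" where "\<M> \<equiv> val_ideal UNIV w"

lemma in_val_ring_iff: "x \<in> \<O> \<longleftrightarrow> x = 0 \<or> 0 \<le> w x"
  by (simp add: val_ring_def)

lemma in_val_ideal_iff: "x \<in> \<M> \<longleftrightarrow> x = 0 \<or> 0 < w x"
  by (simp add: val_ideal_def)

lemma w_mult: "x \<noteq> 0 \<Longrightarrow> y \<noteq> 0 \<Longrightarrow> w (x * y) = w x + w y"
  using valuation by (simp add: discrete_valuation_on_def)

lemma w_add: "x \<noteq> 0 \<Longrightarrow> y \<noteq> 0 \<Longrightarrow> x + y \<noteq> 0 \<Longrightarrow> min (w x) (w y) \<le> w (x + y)"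
  using valuation by (simp add: discrete_valuation_on_def)

lemma w_1 [simp]: "w 1 = 0"
  using w_mult[of 1 1] by simp

lemma w_minus [simp]: "w (- x) = w x"
proof -
  have "w (-1) = 0"
    using w_mult[of "-1" "-1"] by simp
  then show ?thesis
    using w_mult[of "-1" x] by (cases "x = 0") simp_all
qed

lemma w_divide: "x \<noteq> 0 \<Longrightarrow> y \<noteq> 0 \<Longrightarrow> w (x / y) = w x - w y"
  using w_mult[of "x / y" y] by simp

lemma w_power: "x \<noteq> 0 \<Longrightarrow> w (x ^ n) = int n * w x"
  by (induction n) (simp_all add: w_mult algebra_simps)

lemma val_ring_0 [simp]: "0 \<in> \<O>" and val_ring_1 [simp]: "1 \<in> \<O>"
  and val_ideal_0 [simp]: "0 \<in> \<M>" and one_notin_val_ideal [simp]: "1 \<notin> \<M>"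
  by (simp_all add: in_val_ring_iff in_val_ideal_iff)

lemma val_ideal_subset: "x \<in> \<M> \<Longrightarrow> x \<in> \<O>"
  by (auto simp: in_val_ring_iff in_val_ideal_iff)

lemma val_ring_add: "x \<in> \<O> \<Longrightarrow> y \<in> \<O> \<Longrightarrow> x + y \<in> \<O>"
  using w_add[of x y] by (force simp: in_val_ring_iff)

lemma val_ideal_add: "x \<in> \<M> \<Longrightarrow> y \<in> \<M> \<Longrightarrow> x + y \<in> \<M>"
  using w_add[of x y] by (force simp: in_val_ideal_iff)

lemma val_ring_uminus: "x \<in> \<O> \<Longrightarrow> - x \<in> \<O>"
  and val_ideal_uminus: "x \<in> \<M> \<Longrightarrow> - x \<in> \<M>"
  by (simp_all add: in_val_ring_iff in_val_ideal_iff)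

lemma val_ring_diff: "x \<in> \<O> \<Longrightarrow> y \<in> \<O> \<Longrightarrow> x - y \<in> \<O>"
  using val_ring_add[of x "- y"] val_ring_uminus[of y] by simp

lemma val_ring_mult: "x \<in> \<O> \<Longrightarrow> y \<in> \<O> \<Longrightarrow> x * y \<in> \<O>"
  using w_mult[of x y] by (force simp: in_val_ring_iff)

lemma val_ideal_mult_left: "x \<in> \<O> \<Longrightarrow> y \<in> \<M> \<Longrightarrow> x * y \<in> \<M>"
  using w_mult[of x y] by (force simp: in_val_ring_iff in_val_ideal_iff)

lemma val_ideal_mult_right: "x \<in> \<M> \<Longrightarrow> y \<in> \<O> \<Longrightarrow> x * y \<in> \<M>"
  using val_ideal_mult_left[of y x] by (simp add: mult.commute)

lemma val_ring_sum: "(\<And>i. i \<in> A \<Longrightarrow> f i \<in> \<O>) \<Longrightarrow> sum f A \<in> \<O>"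
  by (induction A rule: infinite_finite_induct) (simp_all add: val_ring_add)

lemma val_ideal_sum: "(\<And>i. i \<in> A \<Longrightarrow> f i \<in> \<M>) \<Longrightarrow> sum f A \<in> \<M>"
  by (induction A rule: infinite_finite_induct) (simp_all add: val_ideal_add)

lemma val_ring_prod: "(\<And>i. i \<in> A \<Longrightarrow> f i \<in> \<O>) \<Longrightarrow> prod f A \<in> \<O>"
  by (induction A rule: infinite_finite_induct) (simp_all add: val_ring_mult)

lemma val_ring_power: "x \<in> \<O> \<Longrightarrow> x ^ n \<in> \<O>"
  by (induction n) (simp_all add: val_ring_mult)

lemma of_nat_in_val_ring: "of_nat n \<in> \<O>"
  by (induction n) (simp_all add: val_ring_add)

lemma of_int_in_val_ring: "of_int n \<in> \<O>"
  by (cases n rule: int_cases) (auto intro!: val_ring_uminus val_ring_diff of_nat_in_val_ring)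

lemma val_ideal_prime:
  assumes "finite A" "\<And>i. i \<in> A \<Longrightarrow> f i \<in> \<O>" "prod f A \<in> \<M>"
  shows "\<exists>i\<in>A. f i \<in> \<M>"
  using assms
proof (induction A rule: finite_induct)
  case (insert x F)
  then have "f x * prod f F \<in> \<M>" "f x \<in> \<O>" "prod f F \<in> \<O>"
    by (simp_all add: val_ring_prod)
  then have "f x \<in> \<M> \<or> prod f F \<in> \<M>"
    using w_mult[of "f x" "prod f F"] by (force simp: in_val_ring_iff in_val_ideal_iff)
  with insert show ?case by blast
qed simp

lemma fps_over_val_ideal_add: "f \<in> fps_over \<M> \<Longrightarrow> g \<in> fps_over \<M> \<Longrightarrow> f + g \<in> fps_over \<M>"
  by (simp add: fps_over_def val_ideal_add)

lemma fps_over_val_ring_mult: "f \<in> fps_over \<O> \<Longrightarrow> g \<in> fps_over \<O> \<Longrightarrow> f * g \<in> fps_over \<O>"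
  by (simp add: fps_over_def fps_mult_nth val_ring_sum val_ring_mult)

lemma fps_over_val_ideal_mult: "f \<in> fps_over \<O> \<Longrightarrow> g \<in> fps_over \<M> \<Longrightarrow> f * g \<in> fps_over \<M>"
  by (simp add: fps_over_def fps_mult_nth val_ideal_sum val_ideal_mult_left)

lemma fps_over_val_ring_prod: "(\<And>i. i \<in> A \<Longrightarrow> f i \<in> fps_over \<O>) \<Longrightarrow> prod f A \<in> fps_over \<O>"
proof (induction A rule: infinite_finite_induct)
  case (insert x F)
  then show ?case
    by (simp add: fps_over_val_ring_mult)
qed (simp_all add: fps_over_def)

lemma fps_over_val_ring_if_minus_one:
  assumes "f - 1 \<in> fps_over \<M>"
  shows "f \<in> fps_over \<O>"
proof -
  have "(f - 1) $ n + (1 :: 'a fps) $ n \<in> \<O>" for n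
    using assms val_ideal_subset by (intro val_ring_add) (simp_all add: fps_over_def del: fps_sub_nth)
  then show ?thesis
    by (simp add: fps_over_def)
qed

lemma prod_minus_one_in_fps_over_val_ideal:
  assumes "finite A" and "\<And>i. i \<in> A \<Longrightarrow> f i - 1 \<in> fps_over \<M>"
  shows "prod f A - 1 \<in> fps_over \<M>"
  using assms
proof (induction A rule: finite_induct)
  case (insert x F)
  have "prod f (insert x F) - 1 = f x * (prod f F - 1) + (f x - 1)"
    using insert.hyps by (simp add: algebra_simps)
  then show ?case
    using insert
    by (simp only:) (intro fps_over_val_ideal_add fps_over_val_ideal_mult fps_over_val_ring_if_minus_one, simp_all)
qed (simp add: fps_over_def)

lemma poly_over_val_ring_mult: "f \<in> poly_over \<O> \<Longrightarrow> g \<in> poly_over \<O> \<Longrightarrow> f * g \<in> poly_over \<O>"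
  by (simp add: poly_over_def coeff_mult val_ring_sum val_ring_mult)

lemma prod_linear_in_poly_over_val_ring:
  "(\<And>i. i \<in> A \<Longrightarrow> a i \<in> \<O>) \<Longrightarrow> (\<Prod>i\<in>A. [:- a i, 1:]) \<in> poly_over \<O>"
proof (induction A rule: infinite_finite_induct)
  case (insert x F)
  have "[:- a x, 1:] \<in> poly_over \<O>"
    using insert.prems by (simp add: poly_over_def coeff_pCons val_ring_uminus split: nat.split)
  then show ?case
    unfolding prod.insert[OF insert.hyps] using insert by (intro poly_over_val_ring_mult) simp_all
qed (simp_all add: poly_over_def coeff_1)

lemma poly_diff_in_val_ideal:
  assumes "P - Q \<in> poly_over \<M>" and "x \<in> \<O>"
  shows "poly P x - poly Q x \<in> \<M>"
proof -
  have "poly (P - Q) x \<in> \<M>"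
    unfolding poly_altdef using assms
    by (intro val_ideal_sum val_ideal_mult_right val_ring_power) (simp_all add: poly_over_def)
  then show ?thesis
    by simp
qed

text \<open>Downward induction on the coefficients, starting above the degree.\<close>
lemma poly_over_val_ideal_cancel_linear:
  assumes M: "T * [:- a, 1:] \<in> poly_over \<M>" and a: "a \<in> \<O>"
  shows "T \<in> poly_over \<M>"
proof -
  have coeff_T: "coeff T k = coeff (T * [:- a, 1:]) (Suc k) + a * coeff T (Suc k)" for k
    by (simp add: mult_pCons_right)
  have M': "coeff (T * [:- a, 1:]) j \<in> \<M>" for j
    using M by (simp only: poly_over_def mem_Collect_eq)
  have "\<forall>k. degree T < k + n \<longrightarrow> coeff T k \<in> \<M>" for n
  proof (induction n)
    case (Suc n)
    show ?case
    proof (intro allI impI)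
      fix k
      assume "degree T < k + Suc n"
      then have "coeff T (Suc k) \<in> \<M>"
        using Suc.IH by simp
      then show "coeff T k \<in> \<M>"
        using M' a by (subst coeff_T) (blast intro: val_ideal_add val_ideal_mult_left)
    qed
  qed (simp add: coeff_eq_0)
  from this[of "Suc (degree T)"] show ?thesis
    by (simp add: poly_over_def)
qed

lemma poly_over_val_ideal_cancel_congruent_factors:
  assumes RS: "R * [:- a, 1:] - S * [:- b, 1:] \<in> poly_over \<M>"
    and S: "S \<in> poly_over \<O>" and a: "a \<in> \<O>" and ab: "a - b \<in> \<M>"
  shows "R - S \<in> poly_over \<M>"
proof (rule poly_over_val_ideal_cancel_linear[OF _ a])
  have ring_identity: "(R - S) * L = (R * L - S * (L + K)) + S * K" for L K :: "'a poly"
    by (simp add: algebra_simps)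
  have "[:- b, 1:] = [:- a, 1:] + [:a - b:]"
    by simp
  then have "(R - S) * [:- a, 1:] = (R * [:- a, 1:] - S * [:- b, 1:]) + smult (a - b) S"
    using ring_identity[of "[:- a, 1:]" "[:a - b:]"] by (simp only:) simp
  moreover have "smult (a - b) S \<in> poly_over \<M>"
    using S ab by (simp add: poly_over_def val_ideal_mult_right)
  ultimately show "(R - S) * [:- a, 1:] \<in> poly_over \<M>"
    using RS by (simp add: poly_over_def val_ideal_add del: coeff_diff)
qed

lemma congruent_root_exists:
  fixes \<beta> :: "nat \<Rightarrow> 'a"
  assumes "poly P a = 0" and "a \<in> \<O>" and "\<forall>i<n. \<beta> i \<in> \<O>"
    and "P - (\<Prod>i<n. [:- \<beta> i, 1:]) \<in> poly_over \<M>"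
  shows "\<exists>j<n. a - \<beta> j \<in> \<M>"
proof -
  have "poly P a - poly (\<Prod>i<n. [:- \<beta> i, 1:]) a \<in> \<M>"
    using assms by (intro poly_diff_in_val_ideal)
  then have "- (\<Prod>i<n. a - \<beta> i) \<in> \<M>"
    using assms(1) by (simp add: poly_prod)
  then have "(\<Prod>i<n. a - \<beta> i) \<in> \<M>"
    using val_ideal_uminus by fastforce
  then have "\<exists>j\<in>{..<n}. a - \<beta> j \<in> \<M>"
    using assms(2,3) by (intro val_ideal_prime[where f = "\<lambda>i. a - \<beta> i"]) (simp_all add: val_ring_diff)
  then show ?thesis
    by auto
qed

text \<open>Unique factorization over the residue field, by induction on \<open>d\<close>: a root
  \<open>\<alpha>\<^sub>d\<close> of \<open>P\<close> is congruent to some \<open>\<beta>\<^sub>j\<close>; swap \<open>\<beta>\<^sub>j\<close> into the last position and cancel.\<close>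
lemma roots_matching_if_prod_linear_congruent:
  fixes \<alpha> \<beta> :: "nat \<Rightarrow> 'a"
  assumes "\<forall>i<d. \<alpha> i \<in> \<O>" and "\<forall>i<d. \<beta> i \<in> \<O>"
    and "(\<Prod>i<d. [:- \<alpha> i, 1:]) - (\<Prod>i<d. [:- \<beta> i, 1:]) \<in> poly_over \<M>"
  shows "\<exists>\<sigma>. bij_betw \<sigma> {..<d} {..<d} \<and> (\<forall>i<d. \<alpha> i - \<beta> (\<sigma> i) \<in> \<M>)"
  using assms
proof (induction d arbitrary: \<beta>)
  case 0
  then show ?case
    by (auto intro: bij_betw_id)
next
  case (Suc d)
  have "poly (\<Prod>i<Suc d. [:- \<alpha> i, 1:]) (\<alpha> d) = 0"
    by (simp add: poly_prod)
  then obtain j where j: "j < Suc d" "\<alpha> d - \<beta> j \<in> \<M>"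
    using congruent_root_exists Suc.prems by blast
  define \<tau> where "\<tau> = transpose j d"
  define \<beta>' where "\<beta>' = \<beta> \<circ> \<tau>"
  have \<tau>: "bij_betw \<tau> {..<Suc d} {..<Suc d}"
    using j by (simp add: \<tau>_def)
  have \<beta>': "\<forall>i<d. \<beta>' i \<in> \<O>"
    using Suc.prems(2) bij_betwE[OF \<tau>] by (simp add: \<beta>'_def)
  have "(\<Prod>i<Suc d. [:- \<beta>' i, 1:]) = (\<Prod>i<Suc d. [:- \<beta> i, 1:])"
    using prod.reindex_bij_betw[OF \<tau>, of "\<lambda>i. [:- \<beta> i, 1:]"] by (simp add: \<beta>'_def)
  then have split_off: "(\<Prod>i<d. [:- \<alpha> i, 1:]) * [:- \<alpha> d, 1:] - (\<Prod>i<d. [:- \<beta>' i, 1:]) * [:- \<beta> j, 1:]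
      \<in> poly_over \<M>"
    using Suc.prems(3) by (simp add: \<beta>'_def \<tau>_def)
  have \<beta>'_prod: "(\<Prod>i<d. [:- \<beta>' i, 1:]) \<in> poly_over \<O>"
    using \<beta>' by (intro prod_linear_in_poly_over_val_ring) simp
  have "(\<Prod>i<d. [:- \<alpha> i, 1:]) - (\<Prod>i<d. [:- \<beta>' i, 1:]) \<in> poly_over \<M>"
    by (rule poly_over_val_ideal_cancel_congruent_factors[OF split_off \<beta>'_prod])
      (use Suc.prems(1) j(2) in simp_all)
  moreover have "\<forall>i<d. \<alpha> i \<in> \<O>"
    using Suc.prems(1) by simp
  ultimately obtain \<sigma> where \<sigma>: "bij_betw \<sigma> {..<d} {..<d}" "\<forall>i<d. \<alpha> i - \<beta>' (\<sigma> i) \<in> \<M>"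
    using Suc.IH \<beta>' by blast
  have "bij_betw (\<sigma>(d := d)) {..<d} {..<d}"
    using \<sigma>(1) by (subst bij_betw_cong[where g = \<sigma>]) simp_all
  then have "bij_betw (\<sigma>(d := d)) ({..<d} \<union> {d}) ({..<d} \<union> {d})"
    by (rule bij_betw_combine) simp_all
  then have "bij_betw (\<tau> \<circ> \<sigma>(d := d)) {..<Suc d} {..<Suc d}"
    using \<tau> lessThan_Suc[of d] by (intro bij_betw_trans) simp_all
  moreover have "\<alpha> i - \<beta> ((\<tau> \<circ> \<sigma>(d := d)) i) \<in> \<M>" if "i < Suc d" for i
  proof (cases "i = d")
    case True
    then show ?thesis
      using j(2) by (simp add: \<tau>_def)
  next
    case False
    then show ?thesis
      using \<sigma>(2) that by (simp add: \<beta>'_def)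
  qed
  ultimately show ?case
    by blast
qed

end

locale residue_char_valuation = discrete_valuation w for w :: "'a::field_char_0 \<Rightarrow> int" +
  fixes p :: nat
  assumes prime_p: "prime p" and w_p_pos: "0 < w (of_nat p)"
begin

lemma w_of_nat_nonneg: "n \<noteq> 0 \<Longrightarrow> 0 \<le> w (of_nat n)"
  using of_nat_in_val_ring[of n] by (simp add: in_val_ring_iff)

lemma w_of_nat_coprime:
  assumes "\<not> p dvd j"
  shows "w (of_nat j) = 0"
proof (rule ccontr)
  assume "w (of_nat j) \<noteq> 0"
  moreover have "j \<noteq> 0"
    using assms by (metis dvd_0_right)
  ultimately have j: "of_nat j \<in> \<M>"
    using w_of_nat_nonneg[of j] by (simp add: in_val_ideal_iff)
  have "coprime (int j) (int p)"
    using prime_imp_coprime[OF prime_p assms] by (simp add: coprime_commute)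
  then obtain u v where "u * int j + v * int p = 1"
    by (metis bezout_int coprime_iff_gcd_eq_1)
  then have "(of_int (u * int j + v * int p) :: 'a) = 1"
    by simp
  then have "(of_int u * of_nat j + of_int v * of_nat p :: 'a) = 1"
    by simp
  moreover have "of_int u * of_nat j + of_int v * of_nat p \<in> \<M>"
  proof (rule val_ideal_add)
    show "of_int u * of_nat j \<in> \<M>"
      using j by (rule val_ideal_mult_left[OF of_int_in_val_ring])
    show "of_int v * of_nat p \<in> \<M>"
      using w_p_pos by (intro val_ideal_mult_left[OF of_int_in_val_ring]) (simp add: in_val_ideal_iff)
  qed
  ultimately show False
    by (metis one_notin_val_ideal)
qed

lemma w_fact_Suc: "w (fact (Suc k) :: 'a) = w (fact k :: 'a) + w (of_nat (Suc k) :: 'a)"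
  using w_mult[OF fact_nonzero[of k] of_nat_neq_0[of k]] by (simp add: fact_Suc mult.commute del: of_nat_Suc)

text \<open>Legendre's recursion: only the multiples of \<open>p\<close> contribute to \<open>w (k!)\<close>.\<close>
lemma w_fact_div:
  "w (fact k :: 'a) = w (of_nat p) * int (k div p) + w (fact (k div p) :: 'a)"
proof (induction k)
  case (Suc k)
  have p1: "1 < p"
    using prime_p prime_gt_1_nat by blast
  show ?case
  proof (cases "p dvd Suc k")
    case True
    then obtain i where i: "Suc k = p * Suc i"
      by (metis dvd_def mult_0_right nat.exhaust nat.simps(3))
    then have divs: "Suc k div p = Suc i" "k div p = i"
      using p1 by (simp_all add: div_nat_eqI)
    have "w (fact (Suc k) :: 'a) = w (fact k :: 'a) + w (of_nat p * of_nat (Suc i) :: 'a)"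
      using w_fact_Suc[of k] by (simp only: i of_nat_mult)
    also have "\<dots> = w (of_nat p) * int i + w (fact i :: 'a) + w (of_nat p) + w (of_nat (Suc i) :: 'a)"
      using Suc.IH p1 by (simp add: divs w_mult del: of_nat_Suc)
    also have "\<dots> = w (of_nat p) * int (Suc k div p) + w (fact (Suc k div p) :: 'a)"
      by (simp only: divs w_fact_Suc[of i]) (simp add: algebra_simps)
    finally show ?thesis .
  next
    case False
    then have "Suc k div p = k div p"
      using p1 by (metis div_Suc dvd_eq_mod_eq_0 less_numeral_extra(3) zero_less_Suc)
    then show ?thesis
      unfolding w_fact_Suc using Suc.IH w_of_nat_coprime[OF False] by simp
  qed
qed simp

lemma pos_if_w_p_le:
  assumes "w (of_nat p) \<le> C * (int p - 1)"
  shows "0 < C"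
proof (rule ccontr)
  assume "\<not> 0 < C"
  then have "C * (int p - 1) \<le> 0"
    using prime_gt_1_nat[OF prime_p] by (simp add: mult_nonpos_nonneg)
  then show False
    using w_p_pos assms by linarith
qed

lemma w_fact_le:
  assumes w_p_le: "w (of_nat p) \<le> C * (int p - 1)" and "1 \<le> k"
  shows "w (fact k :: 'a) \<le> C * (int k - 1)"
  using \<open>1 \<le> k\<close>
proof (induction k rule: less_induct)
  case (less k)
  have p1: "1 < p"
    using prime_p prime_gt_1_nat by blast
  have C: "0 < C"
    using w_p_le by (rule pos_if_w_p_le)
  show ?case
  proof (cases "k div p = 0")
    case True
    then show ?thesis
      using w_fact_div[of k] less.prems C by simp
  next
    case False
    have "k div p < k"
      using p1 less.prems by simp
    then have IH: "w (fact (k div p) :: 'a) \<le> C * (int (k div p) - 1)"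
      using less.IH False by simp
    have "w (fact k :: 'a) = w (of_nat p) * int (k div p) + w (fact (k div p) :: 'a)"
      by (rule w_fact_div)
    also have "\<dots> \<le> C * (int p - 1) * int (k div p) + C * (int (k div p) - 1)"
      using w_p_le IH by (intro add_mono mult_right_mono) simp_all
    also have "\<dots> = C * (int p * int (k div p) - 1)"
      by (simp add: algebra_simps)
    also have "\<dots> \<le> C * (int k - 1)"
    proof -
      have "int p * int (k div p) \<le> int k"
        by (metis of_nat_le_iff of_nat_mult times_div_less_eq_dividend)
      then show ?thesis
        using C by simp
    qed
    finally show ?thesis .
  qed
qed

text \<open>This is where \<open>e \<le> p - 1\<close> enters: it makes \<open>w (k!) < k w c\<close> whenever \<open>w c \<ge> C\<close>.\<close>
lemma power_divide_fact_in_val_ideal: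
  assumes w_p_le: "w (of_nat p) \<le> C * (int p - 1)" and c: "c = 0 \<or> C \<le> w c" and "1 \<le> k"
  shows "c ^ k / fact k \<in> \<M>"
proof (cases "c = 0")
  case False
  have "0 < C"
    using w_p_le by (rule pos_if_w_p_le)
  moreover have "int k * C \<le> int k * w c"
    using c False by (simp add: mult_left_mono)
  ultimately have "C * (int k - 1) < int k * w c"
    by (simp add: algebra_simps)
  then have "0 < w (c ^ k / fact k)"
    using w_fact_le[OF w_p_le \<open>1 \<le> k\<close>] False by (simp add: w_divide w_power)
  then show ?thesis
    by (simp add: in_val_ideal_iff)
qed (use \<open>1 \<le> k\<close> in \<open>simp add: in_val_ideal_iff\<close>)

lemma fps_exp_X_power_minus_one_in_val_ideal:
  assumes w_p_le: "w (of_nat p) \<le> C * (int p - 1)" and "c = 0 \<or> C \<le> w c" and "1 \<le> n"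
  shows "fps_exp_X_power c n - 1 \<in> fps_over \<M>"
proof -
  have "c ^ (m div n) / fact (m div n) \<in> \<M>" if "n dvd m" "m \<noteq> 0" for m
    using that \<open>1 \<le> n\<close>
    by (intro power_divide_fact_in_val_ideal[OF w_p_le \<open>c = 0 \<or> C \<le> w c\<close>])
      (auto elim!: dvdE)
  then show ?thesis
    by (simp add: fps_over_def fps_exp_X_power_def)
qed

lemma prod_one_minus_const_X_congruence:
  fixes \<alpha> \<beta> c :: "nat \<Rightarrow> 'a"
  assumes w_p_le: "w (of_nat p) \<le> C * (int p - 1)"
    and \<beta>: "\<forall>i<d. \<beta> i \<in> \<O>"
    and c: "\<forall>n\<ge>1. c n = 0 \<or> C \<le> w (c n)"
    and power_sums: "\<forall>n\<ge>1. (\<Sum>i<d. \<alpha> i ^ n) - (\<Sum>i<d. \<beta> i ^ n) = of_nat n * c n"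
  shows "\<forall>k\<le>d. (\<Prod>i<d. 1 - fps_const (\<alpha> i) * fps_X) $ k - (\<Prod>i<d. 1 - fps_const (\<beta> i) * fps_X) $ k \<in> \<M>"
proof -
  define A where "A = (\<Prod>i<d. 1 - fps_const (\<alpha> i) * fps_X)"
  define B where "B = (\<Prod>i<d. 1 - fps_const (\<beta> i) * fps_X)"
  define G where "G = (\<Prod>n\<in>{1..d}. fps_exp_X_power (- c n) n)"
  define U where "U = (\<Sum>n\<in>{1..d}. fps_const (of_nat n * - c n) * fps_X ^ (n - 1))"
  define S\<^sub>\<alpha> where "S\<^sub>\<alpha> = Abs_fps (\<lambda>n. \<Sum>i<d. \<alpha> i ^ Suc n)"
  define S\<^sub>\<beta> where "S\<^sub>\<beta> = Abs_fps (\<lambda>n. \<Sum>i<d. \<beta> i ^ Suc n)"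
  have "fps_deriv G = U * G"
    unfolding G_def U_def by (intro fps_deriv_prod_eq_sum_mult fps_deriv_fps_exp_X_power) simp_all
  then have deriv_BG: "fps_deriv (B * G) = (U - S\<^sub>\<beta>) * (B * G)"
    using fps_deriv_prod_one_minus_const_X[of "{..<d}" \<beta>]
    by (simp add: B_def S\<^sub>\<beta>_def algebra_simps)
  have low_coeffs: "(U - S\<^sub>\<beta>) $ j = (- S\<^sub>\<alpha>) $ j" if "j < d" for j
  proof -
    have "U $ j = (\<Sum>n\<in>{1..d}. if n = Suc j then of_nat n * - c n else 0)"
      unfolding U_def fps_sum_nth by (intro sum.cong) auto
    also have "\<dots> = - of_nat (Suc j) * c (Suc j)"
      using that by (simp add: algebra_simps)
    finally show ?thesis
      using power_sums[rule_format, of "Suc j"] by (simp add: S\<^sub>\<alpha>_def S\<^sub>\<beta>_def algebra_simps del: power_Suc)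
  qed
  have deriv_A: "fps_deriv A = - S\<^sub>\<alpha> * A"
    unfolding A_def S\<^sub>\<alpha>_def by (rule fps_deriv_prod_one_minus_const_X) simp
  have A_BG: "\<forall>k\<le>d. A $ k = (B * G) $ k"
  proof (rule fps_nth_eq_if_deriv_eq_mult[where S = "- S\<^sub>\<alpha>"])
    show "A $ 0 = (B * G) $ 0"
      by (simp add: A_def B_def G_def fps_prod_nth_0)
    show "\<forall>k<d. fps_deriv A $ k = (- S\<^sub>\<alpha> * A) $ k"
      by (simp add: deriv_A)
    show "\<forall>k<d. fps_deriv (B * G) $ k = (- S\<^sub>\<alpha> * (B * G)) $ k"
    proof (intro allI impI)
      fix k
      assume "k < d"
      then show "fps_deriv (B * G) $ k = (- S\<^sub>\<alpha> * (B * G)) $ k"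
        unfolding deriv_BG by (intro fps_mult_nth_cong) (simp_all add: low_coeffs del: fps_sub_nth)
    qed
  qed
  have "B * (G - 1) \<in> fps_over \<M>"
  proof (rule fps_over_val_ideal_mult)
    show "B \<in> fps_over \<O>"
      unfolding B_def using \<beta>
      by (intro fps_over_val_ring_prod) (simp add: fps_over_def val_ring_uminus)
    show "G - 1 \<in> fps_over \<M>"
      unfolding G_def using c
      by (intro prod_minus_one_in_fps_over_val_ideal fps_exp_X_power_minus_one_in_val_ideal[OF w_p_le]) auto
  qed
  then show ?thesis
    using A_BG by (simp add: fps_over_def A_def B_def algebra_simps)
qed

lemma prod_linear_congruence:
  fixes \<alpha> \<beta> c :: "nat \<Rightarrow> 'a"
  assumes "w (of_nat p) \<le> C * (int p - 1)"
    and "\<forall>i<d. \<beta> i \<in> \<O>"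
    and "\<forall>n\<ge>1. c n = 0 \<or> C \<le> w (c n)"
    and "\<forall>n\<ge>1. (\<Sum>i<d. \<alpha> i ^ n) - (\<Sum>i<d. \<beta> i ^ n) = of_nat n * c n"
  shows "(\<Prod>i<d. [:- \<alpha> i, 1:]) - (\<Prod>i<d. [:- \<beta> i, 1:]) \<in> poly_over \<M>"
proof -
  have degree: "degree (\<Prod>i<d. [:- a i, 1:]) = d" for a :: "nat \<Rightarrow> 'a"
    by (simp add: degree_prod_sum_eq)
  have "coeff (\<Prod>i<d. [:- \<alpha> i, 1:]) k - coeff (\<Prod>i<d. [:- \<beta> i, 1:]) k \<in> \<M>" for k
    using prod_one_minus_const_X_congruence[OF assms] degree[of \<alpha>] degree[of \<beta>]
    by (cases "k \<le> d") (simp_all add: coeff_prod_linear_eq_fps_nth coeff_eq_0)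
  then show ?thesis
    by (simp add: poly_over_def)
qed

end

lemma of_nat_in_subfield: "is_subfield K \<Longrightarrow> of_nat n \<in> K"
  by (induction n) (simp_all add: is_subfield_def)

lemma val_ideal_scaled_valuation_ge:
  assumes "\<forall>x\<in>K - {0}. w x = C * v x" and "0 \<le> C" and "x \<in> val_ideal K v"
  shows "x = 0 \<or> C \<le> w x"
proof (cases "x = 0")
  case False
  then have "x \<in> K" "1 \<le> v x"
    using assms(3) by (auto simp: val_ideal_def)
  then show ?thesis
    using assms(1,2) False mult_left_mono[of 1 "v x" C] by simp
qed simp

theorem proposition6p6:
  fixes K :: "'a::field_char_0 set" and v w :: "'a \<Rightarrow> int" and p :: nat and e :: int
    and P Q :: "'a poly" and d :: nat and \<alpha> \<beta> :: "nat \<Rightarrow> 'a"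
  assumes K: "padic_local_field K v p"
    and e_def: "e = v (of_nat p)"
    and e_le: "e \<le> int p - 1"
    and L: "finite_valued_extension K v w"
    and P_coeffs: "\<forall>i. coeff P i \<in> val_ring K v"
    and Q_coeffs: "\<forall>i. coeff Q i \<in> val_ring K v"
    and P_monic: "lead_coeff P = 1" and Q_monic: "lead_coeff Q = 1"
    and P_deg: "degree P = d" and Q_deg: "degree Q = d"
    and P_roots: "P = (\<Prod>i<d. [:- \<alpha> i, 1:])"
    and Q_roots: "Q = (\<Prod>i<d. [:- \<beta> i, 1:])"
    and \<alpha>_int: "\<forall>i<d. \<alpha> i \<in> val_ring UNIV w"
    and \<beta>_int: "\<forall>i<d. \<beta> i \<in> val_ring UNIV w"
    and cong: "\<forall>n::nat. n \<ge> 1 \<longrightarrow>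
       (\<exists>a\<in>val_ideal K v. (\<Sum>i<d. \<alpha> i ^ n) - (\<Sum>i<d. \<beta> i ^ n) = of_nat n * a)"
  shows "\<exists>\<sigma>. bij_betw \<sigma> {..<d} {..<d} \<and>
           (\<forall>i<d. \<alpha> i - \<beta> (\<sigma> i) \<in> val_ideal UNIV w)"
proof -
  obtain C where "0 < C" and w_v: "\<forall>x\<in>K - {0}. w x = C * v x"
    and w: "discrete_valuation_on UNIV w"
    using L by (auto simp: finite_valued_extension_def)
  have "prime p" and "is_subfield K" and "0 < v (of_nat p)"
    using K by (simp_all add: padic_local_field_def)
  then have w_p: "w (of_nat p) = C * e"
    using w_v of_nat_in_subfield[of K p] prime_gt_0_nat[of p] e_def by simp
  interpret residue_char_valuation w p
    using w \<open>prime p\<close> \<open>0 < C\<close> \<open>0 < v (of_nat p)\<close> by unfold_locales (simp_all add: w_p e_def)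
  obtain c where c: "\<forall>n\<ge>1. c n \<in> val_ideal K v \<and>
      (\<Sum>i<d. \<alpha> i ^ n) - (\<Sum>i<d. \<beta> i ^ n) = of_nat n * c n"
    using cong by metis
  have "\<forall>n\<ge>1. c n = 0 \<or> C \<le> w (c n)"
    using c val_ideal_scaled_valuation_ge[OF w_v] \<open>0 < C\<close> by simp
  moreover have "w (of_nat p) \<le> C * (int p - 1)"
    using w_p e_le \<open>0 < C\<close> by simp
  ultimately have "P - Q \<in> poly_over \<M>"
    using prod_linear_congruence \<beta>_int c unfolding P_roots Q_roots by blast
  then show ?thesis
    using roots_matching_if_prod_linear_congruent \<alpha>_int \<beta>_int unfolding P_roots Q_roots by blast
qed

end
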